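(* Let $q$ be an odd prime power, $d$ a positive integer, $\varphi_d$ the coloring defined below, and $t\ge 2$ an integer. No affine subspace of $\mathbb{F}_q^d$ of dimension $t-2$ contains a $t$-falling star of $(\mathbb{F}_q^* )^d$ under $\varphi_d$. Consequently, $\mathrm{af}(S) \ge \mathrm{FS}(S) - 1$ for every nonempty finite subset $S \subseteq (\mathbb{F}_q^* )^d$.
   Context: $\mathbb{F}_q^*$ is the set of nonzero elements of $\mathbb{F}_q$, endowed with an arbitrary fixed linear order; $(\mathbb{F}_q^* )^d$ is ordered lexicographically with respect to it. Let $C_d = \mathrm{DOT} \sqcup \mathrm{ZERO}\sqcup\mathrm{UP}\sqcup\mathrm{DOWN}$, where $\mathrm{DOT} = \mathbb{F}_q^*$ and ZERO, UP, DOWN are three disjoint copies of $\{1,\dots,d\}\times \mathbb{F}_q$. For distinct $x<y$ in $(\mathbb{F}_q^* )^d$, let $i$ be the first coordinate where $x$ and $y$ differ, and $x\cdot y$ the standard dot product; $\varphi_d(x,y)=\varphi_d(y,x)$ is $(i,x_i+y_i)$ in ZERO if $x\cdot y=0$; $(i,x_i+y_i)$ in UP if $x\cdot y\ne 0$ and $x\cdot y=x\cdot x$; $(i,x_i+y_i)$ in DOWN if $x\cdot y\notin\{0,x\cdot x\}$ and $x\cdot y=y\cdot y$; and $x\cdot y\in\mathrm{DOT}$ otherwise. Distinct vectors $s_1,\dots,s_t$ form a $t$-falling star under $\varphi_d$ if there are colors $\alpha_2,\dots,\alpha_t$ with $\varphi_d(s_i,s_j)=\alpha_i$ for all $1\le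 j<i\le t$ (i.e., after some labeling, each vector's edges to all earlier vectors share one color). $\mathrm{FS}(S)$ is the maximum $t$ such that $S$ contains a $t$-falling star; $\mathrm{af}(S)$ is the dimension of the affine hull of $S$. *)

theory Defs
  imports Main
begin

text \<open>Vectors of F_q^d are lists of length d over a finite field 'a.
  Coordinates are indexed 0..d-1 (the paper uses 1..d).\<close>

definition dotp :: "'a::field list \<Rightarrow> 'a list \<Rightarrow> 'a" where
  "dotp x y = (\<Sum>i<length x. x ! i * y ! i)"

definition nzvecs :: "nat \<Rightarrow> 'a::field list set" where
  "nzvecs d = {x. length x = d \<and> (\<forall>i<d. x ! i \<noteq> 0)}"

definition elt_less :: "'a rel \<Rightarrow> 'a \<Rightarrow> 'a \<Rightarrow> bool" where
  "elt_less R a b \<longleftrightarrow> (a, b) \<in> R \<and> a \<noteq> b"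

definition first_diff :: "'a list \<Rightarrow> 'a list \<Rightarrow> nat" where
  "first_diff x y = (LEAST i. x ! i \<noteq> y ! i)"

definition lex_less :: "'a rel \<Rightarrow> 'a list \<Rightarrow> 'a list \<Rightarrow> bool" where
  "lex_less R x y \<longleftrightarrow> x \<noteq> y \<and> elt_less R (x ! first_diff x y) (y ! first_diff x y)"

datatype 'a color = DOT 'a | ZERO nat 'a | UP nat 'a | DOWN nat 'a

definition phi_ord :: "'a::field list \<Rightarrow> 'a list \<Rightarrow> 'a color" where
  "phi_ord x y =
     (let i = first_diff x y; s = x ! i + y ! i in
      if dotp x y = 0 then ZERO i s
      else if dotp x y = dotp x x then UP i s
      else if dotp x y = dotp y y then DOWN i s
      else DOT (dotp x y))"

definition phi :: "'a::field rel \<Rightarrow> 'a list \<Rightarrow> 'a list \<Rightarrow> 'a color" where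
  "phi R x y = (if lex_less R x y then phi_ord x y else phi_ord y x)"

text \<open>A list s of t distinct vectors is a t-falling star (for the labeling given
  by the list order) if each vector's edges to all earlier vectors share a colour.\<close>
definition falling_star :: "'a::field rel \<Rightarrow> 'a list list \<Rightarrow> bool" where
  "falling_star R s \<longleftrightarrow> distinct s \<and>
     (\<exists>\<alpha>. \<forall>i<length s. \<forall>j<i. phi R (s ! i) (s ! j) = \<alpha> i)"

definition FS :: "'a::field rel \<Rightarrow> 'a list set \<Rightarrow> nat" where
  "FS R S = Max {t. \<exists>s. falling_star R s \<and> set s \<subseteq> S \<and> length s = t}"

definition lin_indep :: "nat \<Rightarrow> 'a::field list list \<Rightarrow> bool" where
  "lin_indep d vs \<longleftrightarrow> (\<forall>c. (\<forall>i<d. (\<Sum>j<length vs. c j * vs ! j ! i) = 0)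
                               \<longrightarrow> (\<forall>j<length vs. c j = 0))"

definition affine_span_of :: "nat \<Rightarrow> 'a::field list \<Rightarrow> 'a list list \<Rightarrow> 'a list set" where
  "affine_span_of d p vs =
     {map (\<lambda>i. p ! i + (\<Sum>j<length vs. c j * vs ! j ! i)) [0..<d] | c. True}"

definition affine_subspace_dim :: "nat \<Rightarrow> nat \<Rightarrow> 'a::field list set \<Rightarrow> bool" where
  "affine_subspace_dim d k A \<longleftrightarrow>
     (\<exists>p vs. length p = d \<and> length vs = k \<and> (\<forall>v\<in>set vs. length v = d) \<and>
             lin_indep d vs \<and> A = affine_span_of d p vs)"

definition af :: "nat \<Rightarrow> 'a::field list set \<Rightarrow> nat" where
  "af d S = (LEAST k. \<exists>A. affine_subspace_dim d k A \<and> S \<subseteq> A)"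

end

theory Submission
  imports Defs HOL.Vector_Spaces "HOL-Library.Function_Algebras"
begin

(* Let s_0, ..., s_{t-1} be a falling star. For 0 < i < t all edges from s_i to the earlier
   vectors share one colour, and that colour yields an affine hyperplane through s_0, ..., s_{i-1}
   missing s_i: for the colour DOT c it is {y. s_i . y = c}, which misses s_i because
   s_i . s_i differs from c; for a colour (k, s_i!k + s_j!k) it is {y. y!k = s_0!k}, which misses
   s_i because k is the first coordinate where s_i and s_0 differ. The linear parts of these
   hyperplanes make the differences s_i - s_0 a triangular, hence linearly independent, family,
   and t - 1 independent vectors do not fit into the direction space of an affine subspace of
   dimension t - 2. *)

definition fun_scale :: "'a::field \<Rightarrow> ('i \<Rightarrow> 'a) \<Rightarrow> 'i \<Rightarrow> 'a" where
  "fun_scale c f = (\<lambda>i. c * f i)"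

lemma fun_scale_apply [simp]: "fun_scale c f i = c * f i"
  by (simp add: fun_scale_def)

interpretation fun_space: vector_space "fun_scale :: 'a::field \<Rightarrow> ('i \<Rightarrow> 'a) \<Rightarrow> _"
  by unfold_locales (auto simp: algebra_simps fun_eq_iff)

lemma sum_fun_apply: "(\<Sum>x\<in>A. f x) i = (\<Sum>x\<in>A. f x i)"
  by (induction A rule: infinite_finite_induct) auto

lemma linear_weighted_sum:
  "Vector_Spaces.linear fun_scale (*) (\<lambda>f. \<Sum>l\<in>L. g l * f l :: 'a::field)"
  unfolding linear_iff
  by (auto simp: fun_space.vector_space_axioms vector_space_def module_def algebra_simps
      sum.distrib sum_distrib_left)

context vector_space begin

lemma triangular_family_independent:
  fixes w :: "nat \<Rightarrow> 'b"
  assumes "\<And>i. i < n \<Longrightarrow>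
    \<exists>h. Vector_Spaces.linear scale (*) h \<and> (\<forall>j<i. h (w j) = 0) \<and> h (w i) \<noteq> 0"
  shows "independent (w ` {..<n}) \<and> card (w ` {..<n}) = n"
  using assms
proof (induction n)
  case 0
  show ?case by (simp add: independent_empty)
next
  case (Suc n)
  have IH: "independent (w ` {..<n})" "card (w ` {..<n}) = n"
    using Suc by simp_all
  obtain h where h: "Vector_Spaces.linear scale (*) h" "\<forall>j<n. h (w j) = 0" "h (w n) \<noteq> 0"
    using Suc.prems by blast
  have "h v = 0" if "v \<in> span (w ` {..<n})" for v
    by (rule module_hom.eq_0_on_span[OF h(1)[unfolded linear_iff_module_hom] _ that])
      (use h(2) in auto)
  then have not_in_span: "w n \<notin> span (w ` {..<n})"
    using h(3) by blast
  then have "w n \<notin> w ` {..<n}"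
    by (meson span_base)
  moreover have "w ` {..<Suc n} = insert (w n) (w ` {..<n})"
    by (simp add: lessThan_Suc)
  ultimately show ?case
    using IH not_in_span by (simp add: independent_insert card_insert_disjoint)
qed

lemma triangular_family_card_le:
  fixes w :: "nat \<Rightarrow> 'b"
  assumes "\<And>i. i < n \<Longrightarrow>
    \<exists>h. Vector_Spaces.linear scale (*) h \<and> (\<forall>j<i. h (w j) = 0) \<and> h (w i) \<noteq> 0"
    and "\<And>i. i < n \<Longrightarrow> w i \<in> span V" and "finite V"
  shows "n \<le> card V"
proof -
  have "w ` {..<n} \<subseteq> span V"
    using assms(2) by blast
  then show ?thesis
    using triangular_family_independent[OF assms(1)] independent_span_bound[OF assms(3)]
    by metis
qed

end

definition coords :: "nat \<Rightarrow> 'a::zero list \<Rightarrow> nat \<Rightarrow> 'a" where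
  "coords d x = (\<lambda>l. if l < d then x ! l else 0)"

lemma coords_affine_span:
  fixes p :: "'a::field list"
  assumes "x \<in> affine_span_of d p vs"
  shows "coords d x - coords d p \<in> fun_space.span (coords d ` set vs)"
proof -
  obtain c where x: "x = map (\<lambda>i. p ! i + (\<Sum>j<length vs. c j * vs ! j ! i)) [0..<d]"
    using assms unfolding affine_span_of_def by blast
  have "coords d x - coords d p = (\<Sum>j<length vs. fun_scale (c j) (coords d (vs ! j)))"
    by (rule ext) (simp add: x coords_def sum_fun_apply)
  also have "\<dots> \<in> fun_space.span (coords d ` set vs)"
    by (intro fun_space.span_sum fun_space.span_scale fun_space.span_base) auto
  finally show ?thesis .
qed

lemma sum_mult_coords: "length x = d \<Longrightarrow> (\<Sum>l<d. x ! l * coords d y l) = dotp x y"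
  by (simp add: coords_def dotp_def)

fun coord_label :: "'a color \<Rightarrow> (nat \<times> 'a) option" where
  "coord_label (DOT c) = None"
| "coord_label (ZERO k a) = Some (k, a)"
| "coord_label (UP k a) = Some (k, a)"
| "coord_label (DOWN k a) = Some (k, a)"

lemma first_diff_commute: "first_diff x y = first_diff y x"
  unfolding first_diff_def by metis

lemma first_diff_less:
  assumes "length x = d" "length y = d" "x \<noteq> y"
  shows "first_diff x y < d \<and> x ! first_diff x y \<noteq> y ! first_diff x y"
proof -
  obtain l where l: "l < d" "x ! l \<noteq> y ! l"
    using assms nth_equalityI by metis
  have "x ! first_diff x y \<noteq> y ! first_diff x y"
    unfolding first_diff_def by (rule LeastI[of _ l]) (use l in auto)
  moreover have "first_diff x y \<le> l"
    unfolding first_diff_def by (rule Least_le) (use l in auto)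
  ultimately show ?thesis
    using l by simp
qed

lemma phi_DOT:
  assumes "length x = length y" "phi R x y = DOT c"
  shows "dotp x y = c \<and> dotp x x \<noteq> c"
proof -
  have "dotp y x = dotp x y"
    using assms(1) unfolding dotp_def by (simp add: mult.commute)
  then show ?thesis
    using assms(2) unfolding phi_def phi_ord_def Let_def by (auto split: if_splits)
qed

lemma phi_coord_label:
  assumes "coord_label (phi R x y) = Some (k, a)"
  shows "k = first_diff x y \<and> a = x ! k + y ! k"
  using assms first_diff_commute[of x y]
  unfolding phi_def phi_ord_def Let_def by (auto split: if_splits simp: add.commute)

lemma monochromatic_edges_separate:
  fixes x :: "'a::field list"
  assumes mono: "\<And>y. y \<in> Y \<Longrightarrow> phi R x y = \<alpha>" and z: "z \<in> Y" and "x \<notin> Y"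
    and len: "length x = d" "\<And>y. y \<in> Y \<Longrightarrow> length y = d"
  obtains h c where "Vector_Spaces.linear fun_scale (*) h"
    and "\<And>y. y \<in> Y \<Longrightarrow> h (coords d y) = c" and "h (coords d x) \<noteq> c"
proof (cases "coord_label \<alpha>")
  case None
  then obtain c where \<alpha>: "\<alpha> = DOT c"
    by (cases \<alpha>) auto
  have dot: "dotp x y = c \<and> dotp x x \<noteq> c" if "y \<in> Y" for y
    using phi_DOT[of x y R c] mono[OF that] len that \<alpha> by auto
  show thesis
  proof (rule that[of "\<lambda>f. \<Sum>l<d. x ! l * f l" c])
    show "Vector_Spaces.linear fun_scale (*) (\<lambda>f. \<Sum>l<d. x ! l * f l)"
      by (rule linear_weighted_sum)
  qed (use dot z sum_mult_coords[OF len(1)] in auto)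
next
  case (Some label)
  then obtain k a where ka: "coord_label \<alpha> = Some (k, a)"
    by (cases label) simp
  have k: "k = first_diff x y \<and> a = x ! k + y ! k" if "y \<in> Y" for y
    using phi_coord_label[of R x y k a] mono[OF that] ka by simp
  have "k < d" "x ! k \<noteq> z ! k"
    using first_diff_less[of x d z] k[OF z] len z \<open>x \<notin> Y\<close> by auto
  show thesis
  proof (rule that[of "\<lambda>f. f k" "a - x ! k"])
    show "Vector_Spaces.linear fun_scale (*) (\<lambda>f. f k)"
      using linear_weighted_sum[where L = "{k}" and g = "\<lambda>_. 1"] by simp
  qed (use k z \<open>k < d\<close> \<open>x ! k \<noteq> z ! k\<close> in \<open>auto simp: coords_def\<close>)
qed

lemma falling_star_length_le_affine_dim:
  fixes R :: "'a::field rel"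
  assumes star: "falling_star R s" and len: "\<And>v. v \<in> set s \<Longrightarrow> length v = d"
    and A: "affine_subspace_dim d k A" "set s \<subseteq> A"
  shows "length s \<le> Suc k"
proof -
  obtain p vs where vs: "length vs = k" "A = affine_span_of d p vs"
    using A(1) unfolding affine_subspace_dim_def by blast
  obtain \<alpha> where "distinct s"
    and \<alpha>: "\<And>i j. i < length s \<Longrightarrow> j < i \<Longrightarrow> phi R (s ! i) (s ! j) = \<alpha> i"
    using star unfolding falling_star_def by blast
  define w where "w i = coords d (s ! Suc i) - coords d (s ! 0)" for i
  have "length s - 1 \<le> card (coords d ` set vs)"
  proof (rule fun_space.triangular_family_card_le)
    fix i assume i: "i < length s - 1"
    let ?earlier = "(!) s ` {..i}"
    have mono: "phi R (s ! Suc i) y = \<alpha> (Suc i)" if "y \<in> ?earlier" for y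
      using that i \<alpha> by auto
    have first: "s ! 0 \<in> ?earlier"
      by simp
    have fresh: "s ! Suc i \<notin> ?earlier"
      using i \<open>distinct s\<close> by (auto simp: nth_eq_iff_index_eq)
    have lengths: "length (s ! Suc i) = d" "\<And>y. y \<in> ?earlier \<Longrightarrow> length y = d"
      using i len by auto
    obtain h c where h: "Vector_Spaces.linear fun_scale (*) h"
      and earlier: "\<And>y. y \<in> ?earlier \<Longrightarrow> h (coords d y) = c"
      and later: "h (coords d (s ! Suc i)) \<noteq> c"
      using monochromatic_edges_separate[OF mono first fresh lengths] by blast
    have h_w: "h (w j) = h (coords d (s ! Suc j)) - c" if "j \<le> i" for j
      using module_hom.diff[OF h[unfolded linear_iff_module_hom]] earlier[of "s ! 0"]
      unfolding w_def by simp
    show "\<exists>h. Vector_Spaces.linear fun_scale (*) h \<and> (\<forall>j<i. h (w j) = 0) \<and> h (w i) \<noteq> 0"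
      using h h_w earlier later by (intro exI[of _ h]) auto
  next
    fix i assume "i < length s - 1"
    then have "Suc i < length s" "0 < length s"
      by auto
    then have "s ! Suc i \<in> A" "s ! 0 \<in> A"
      using A(2) nth_mem by blast+
    moreover have "w i = (coords d (s ! Suc i) - coords d p) - (coords d (s ! 0) - coords d p)"
      unfolding w_def by simp
    ultimately show "w i \<in> fun_space.span (coords d ` set vs)"
      unfolding vs(2) by (metis coords_affine_span fun_space.span_diff)
  qed simp
  also have "\<dots> \<le> k"
    using card_image_le[of "set vs" "coords d"] card_length[of vs] vs(1) by simp
  finally show ?thesis
    by linarith
qed

lemma affine_subspace_dim_full: "affine_subspace_dim d d {x :: 'a::field list. length x = d}"
proof -
  define vs :: "'a list list" where
    "vs = map (\<lambda>j. map (\<lambda>i. if i = j then 1 else 0) [0..<d]) [0..<d]"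
  have sum_vs: "(\<Sum>j<d. c j * vs ! j ! i) = c i" if "i < d" for c i
  proof -
    have "(\<Sum>j<d. c j * vs ! j ! i) = (\<Sum>j<d. if i = j then c j else 0)"
      by (rule sum.cong) (use that in \<open>auto simp: vs_def\<close>)
    then show ?thesis
      using that by simp
  qed
  have length_vs: "length vs = d"
    by (simp add: vs_def)
  have "lin_indep d vs"
    unfolding lin_indep_def using sum_vs by (simp add: vs_def)
  moreover have "{x. length x = d} \<subseteq> affine_span_of d (replicate d 0) vs"
  proof
    fix x :: "'a list"
    assume "x \<in> {x. length x = d}"
    then have "x = map (\<lambda>i. replicate d 0 ! i + (\<Sum>j<length vs. x ! j * vs ! j ! i)) [0..<d]"
      by (intro nth_equalityI) (simp_all add: sum_vs length_vs)
    then show "x \<in> affine_span_of d (replicate d 0) vs"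
      unfolding affine_span_of_def by blast
  qed
  moreover have "affine_span_of d (replicate d 0) vs \<subseteq> {x. length x = d}"
    unfolding affine_span_of_def by auto
  ultimately show ?thesis
    unfolding affine_subspace_dim_def
    by (intro exI[of _ "replicate d 0"] exI[of _ vs]) (auto simp: length_vs vs_def)
qed

lemma FS_attained:
  assumes "finite S"
  obtains s where "falling_star R s" "set s \<subseteq> S" "length s = FS R S"
proof -
  let ?T = "{t. \<exists>s. falling_star R s \<and> set s \<subseteq> S \<and> length s = t}"
  have "?T \<subseteq> {..card S}"
  proof
    fix t assume "t \<in> ?T"
    then obtain s where "distinct s" "set s \<subseteq> S" "length s = t"
      unfolding falling_star_def by blast
    then have "t = card (set s)"
      by (simp add: distinct_card)
    also have "\<dots> \<le> card S"
      by (rule card_mono[OF assms \<open>set s \<subseteq> S\<close>])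
    finally show "t \<in> {..card S}"
      by simp
  qed
  then have "finite ?T"
    using finite_subset by blast
  moreover have "0 \<in> ?T"
    unfolding falling_star_def by (intro CollectI exI[of _ "[]"]) simp
  ultimately have "FS R S \<in> ?T"
    unfolding FS_def using Max_in by blast
  then show thesis
    using that by blast
qed

lemma af_attained:
  assumes "\<And>x. x \<in> S \<Longrightarrow> length x = d"
  obtains A where "affine_subspace_dim d (af d S) A" "S \<subseteq> A"
proof -
  have "S \<subseteq> {x. length x = d}"
    using assms by blast
  then have "\<exists>A. affine_subspace_dim d d A \<and> S \<subseteq> A"
    using affine_subspace_dim_full by blast
  then have "\<exists>A. affine_subspace_dim d (af d S) A \<and> S \<subseteq> A"
    unfolding af_def by (rule LeastI)
  then show thesis
    using that by blast
qed

theorem lemma3p9: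
  fixes R :: "'a::{field,finite} rel" and d :: nat
  assumes "odd (card (UNIV :: 'a set))"
    and "d > 0"
    and "linear_order_on (UNIV - {0}) R"
  shows "(\<forall>t\<ge>2. \<forall>A s. affine_subspace_dim d (t - 2) A \<longrightarrow>
            falling_star R s \<longrightarrow> length s = t \<longrightarrow> set s \<subseteq> nzvecs d \<longrightarrow>
            \<not> set s \<subseteq> A)
       \<and> (\<forall>S. finite S \<longrightarrow> S \<noteq> {} \<longrightarrow> S \<subseteq> nzvecs d \<longrightarrow> FS R S - 1 \<le> af d S)"
proof (intro conjI allI impI notI)
  fix t A s
  assume "2 \<le> t" "affine_subspace_dim d (t - 2) A" "falling_star R s" "length s = t"
    "set s \<subseteq> nzvecs d" "set s \<subseteq> A"
  then have "t \<le> Suc (t - 2)"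
    using falling_star_length_le_affine_dim[of R s d "t - 2" A] by (auto simp: nzvecs_def)
  with \<open>2 \<le> t\<close> show False
    by linarith
next
  fix S :: "'a list set"
  assume "finite S" "S \<subseteq> nzvecs d"
  then have lengths: "\<And>x. x \<in> S \<Longrightarrow> length x = d"
    by (auto simp: nzvecs_def)
  obtain s where s: "falling_star R s" "set s \<subseteq> S" "length s = FS R S"
    using FS_attained[OF \<open>finite S\<close>] by blast
  obtain A where A: "affine_subspace_dim d (af d S) A" "S \<subseteq> A"
    using af_attained[OF lengths] by blast
  have "length s \<le> Suc (af d S)"
    by (rule falling_star_length_le_affine_dim[OF s(1) _ A(1)]) (use s(2) lengths A(2) in auto)
  then show "FS R S - 1 \<le> af d S"
    using s(3) by simp
qed

end
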